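(* Let $t=\lceil\frac{n-\kappa}{2}\rceil$ and $\mathrm{Small}(x)=\mathrm{Small}_t(x)$. Suppose $\mathrm{Small}(u)$ and $\mathrm{Small}(v)$ both exist and $u\in\mathrm{Side}_{\mathrm{Small}(v)}(v)$, and suppose $W$ is a $\kappa$-cut with $u\notin W$ and $\kappa\le|\mathrm{Side}_{\mathrm{Small}(v)}(v)|<|\mathrm{Side}_W(u)|\le t$. Then $v\in W\cup\mathrm{Side}_W(u)$.
   Context: $G=(V,E)$ is a finite, simple, connected, undirected, non-complete graph with $n=|V|$; $\kappa$ is its vertex connectivity, assumed $\kappa<n/4$. A cut is a set $U\subset V$ whose removal disconnects $G$; a $\kappa$-cut is a cut of size $\kappa$; a side of $U$ is a connected component of the subgraph induced on $V\setminus U$; $\mathrm{Side}_U(x)$ is the side containing $x\notin U$. For a vertex $x$ and $t\le\lceil\frac{n-\kappa}{2}\rceil$, $\mathrm{Small}_t(x)$ denotes, when it exists, the unique $\kappa$-cut $Y$ with $x\notin Y$, $|\mathrm{Side}_Y(x)|\le t$, and $\mathrm{Side}_Y(x)\subseteq\mathrm{Side}_U(x)$ for every $\kappa$-cut $U$ with $x\notin U$ and $|\mathrm{Side}_U(x)|\le t$ (it exists iff some $\kappa$-cut $U$ with $x\notin U$ has $|\mathrm{Side}_U(x)|\le t$). *)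

theory Defs
  imports Complex_Main
begin

definition simple_graph :: "'a set \<Rightarrow> ('a \<Rightarrow> 'a \<Rightarrow> bool) \<Rightarrow> bool" where
  "simple_graph V E \<longleftrightarrow> finite V \<and> (\<forall>x y. E x y \<longrightarrow> x \<in> V \<and> y \<in> V \<and> x \<noteq> y \<and> E y x)"

definition reach_in :: "('a \<Rightarrow> 'a \<Rightarrow> bool) \<Rightarrow> 'a set \<Rightarrow> 'a \<Rightarrow> 'a \<Rightarrow> bool" where
  "reach_in E S x y \<longleftrightarrow> x \<in> S \<and> y \<in> S \<and> (\<lambda>a b. E a b \<and> a \<in> S \<and> b \<in> S)\<^sup>*\<^sup>* x y"

definition graph_connected :: "'a set \<Rightarrow> ('a \<Rightarrow> 'a \<Rightarrow> bool) \<Rightarrow> bool" where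
  "graph_connected V E \<longleftrightarrow> V \<noteq> {} \<and> (\<forall>x\<in>V. \<forall>y\<in>V. reach_in E V x y)"

definition complete_graph :: "'a set \<Rightarrow> ('a \<Rightarrow> 'a \<Rightarrow> bool) \<Rightarrow> bool" where
  "complete_graph V E \<longleftrightarrow> (\<forall>x\<in>V. \<forall>y\<in>V. x \<noteq> y \<longrightarrow> E x y)"

definition is_cut :: "'a set \<Rightarrow> ('a \<Rightarrow> 'a \<Rightarrow> bool) \<Rightarrow> 'a set \<Rightarrow> bool" where
  "is_cut V E U \<longleftrightarrow> U \<subseteq> V \<and> (\<exists>x\<in>V - U. \<exists>y\<in>V - U. \<not> reach_in E (V - U) x y)"

text \<open>Vertex connectivity (G non-complete, so cuts exist).\<close>
definition vconn :: "'a set \<Rightarrow> ('a \<Rightarrow> 'a \<Rightarrow> bool) \<Rightarrow> nat" where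
  "vconn V E = Min {card U | U. is_cut V E U}"

definition is_kcut :: "'a set \<Rightarrow> ('a \<Rightarrow> 'a \<Rightarrow> bool) \<Rightarrow> 'a set \<Rightarrow> bool" where
  "is_kcut V E U \<longleftrightarrow> is_cut V E U \<and> card U = vconn V E"

definition side :: "'a set \<Rightarrow> ('a \<Rightarrow> 'a \<Rightarrow> bool) \<Rightarrow> 'a set \<Rightarrow> 'a \<Rightarrow> 'a set" where
  "side V E U x = {y. reach_in E (V - U) x y}"

definition is_small :: "'a set \<Rightarrow> ('a \<Rightarrow> 'a \<Rightarrow> bool) \<Rightarrow> nat \<Rightarrow> 'a \<Rightarrow> 'a set \<Rightarrow> bool" where
  "is_small V E t x Y \<longleftrightarrow> is_kcut V E Y \<and> x \<notin> Y \<and> card (side V E Y x) \<le> t \<and>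
     (\<forall>U. is_kcut V E U \<and> x \<notin> U \<and> card (side V E U x) \<le> t \<longrightarrow> side V E Y x \<subseteq> side V E U x)"

definition small_exists :: "'a set \<Rightarrow> ('a \<Rightarrow> 'a \<Rightarrow> bool) \<Rightarrow> nat \<Rightarrow> 'a \<Rightarrow> bool" where
  "small_exists V E t x \<longleftrightarrow> (\<exists>Y. is_small V E t x Y)"

end

theory Submission
  imports Defs
begin

(* Suppose v is neither in W nor in A = Side_W(u), and let S = Side_Yv(v). The corner
   S - W - A contains v and is closed under edges up to N = (Yv - A) \<union> (W \<inter> S); it misses
   u \<in> A, so N is a cut and |N| \<ge> \<kappa>. If the opposite corner A - Yv - S is nonempty, its
   separator (W - S) \<union> (Yv \<inter> A) is a cut as well; the two separators together have at most
   |Yv| + |W| = 2\<kappa> vertices, so N is a \<kappa>-cut whose side of v lies in S but misses u,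
   contradicting the minimality of Yv = Small(v). Otherwise A \<subseteq> S \<union> Yv, and |N| \<ge> |Yv|
   gives |Yv \<inter> A| \<le> |W \<inter> S|, whence |A| < |S|, contradicting the size hypothesis. *)

lemma side_subset: "side V E U x \<subseteq> V - U"
  unfolding side_def reach_in_def by auto

lemma mem_side_self: "x \<in> V - U \<Longrightarrow> x \<in> side V E U x"
  unfolding side_def reach_in_def by auto

lemma side_edge_closed:
  assumes "simple_graph V E" "a \<in> side V E U x" "E a b" "b \<notin> U"
  shows "b \<in> side V E U x"
proof -
  have "b \<in> V" using assms(1,3) unfolding simple_graph_def by blast
  moreover from assms(2) have "(\<lambda>a b. E a b \<and> a \<in> V - U \<and> b \<in> V - U)\<^sup>*\<^sup>* x a" "x \<in> V - U" "a \<in> V - U"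
    unfolding side_def reach_in_def by auto
  ultimately show ?thesis
    using assms(3,4) unfolding side_def reach_in_def by (auto intro: rtranclp.rtrancl_into_rtrancl)
qed

lemma side_subset_if_closed:
  assumes "x \<in> X" and closed: "\<forall>a\<in>X. \<forall>b. E a b \<longrightarrow> b \<in> X \<union> N"
  shows "side V E N x \<subseteq> X"
proof
  fix z assume "z \<in> side V E N x"
  then have "(\<lambda>a b. E a b \<and> a \<in> V - N \<and> b \<in> V - N)\<^sup>*\<^sup>* x z"
    unfolding side_def reach_in_def by blast
  then show "z \<in> X"
    by (induction rule: rtranclp_induct) (use assms in blast)+
qed

lemma is_cut_if_not_in_side:
  assumes "N \<subseteq> V" "x \<in> V - N" "y \<in> V - N" "y \<notin> side V E N x"
  shows "is_cut V E N"
  using assms unfolding is_cut_def side_def by blast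

lemma vconn_le_card_cut:
  assumes "simple_graph V E" "is_cut V E U"
  shows "vconn V E \<le> card U"
proof -
  have "{card U |U. is_cut V E U} \<subseteq> card ` Pow V" unfolding is_cut_def by auto
  moreover have "finite V" using assms(1) unfolding simple_graph_def by blast
  ultimately have "finite {card U |U. is_cut V E U}" by (meson finite_Pow_iff finite_imageI finite_subset)
  then show ?thesis unfolding vconn_def using assms(2) by (intro Min_le) auto
qed

lemma side_corner_is_cut:
  fixes V :: "'a set" and E :: "'a \<Rightarrow> 'a \<Rightarrow> bool" and Y W :: "'a set" and a b x y :: 'a
  assumes "simple_graph V E" "Y \<subseteq> V" "W \<subseteq> V"
  defines "S \<equiv> side V E Y a" and "A \<equiv> side V E W b"
  assumes "x \<in> S - W - A" "y \<in> A"
  shows "is_cut V E ((Y - A) \<union> (W \<inter> S)) \<and> side V E ((Y - A) \<union> (W \<inter> S)) x \<subseteq> S - W - A"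
proof -
  have sym: "E q p" if "E p q" for p q
    using assms(1) that unfolding simple_graph_def by blast
  have closed: "\<forall>p\<in>S - W - A. \<forall>q. E p q \<longrightarrow> q \<in> (S - W - A) \<union> ((Y - A) \<union> (W \<inter> S))"
  proof (intro ballI allI impI)
    fix p q assume p: "p \<in> S - W - A" and "E p q"
    \<comment> \<open>an edge from p into A would put p into A, since p \<notin> W\<close>
    have "q \<notin> A"
      using p side_edge_closed[OF assms(1), of q W b p] sym[OF \<open>E p q\<close>] unfolding A_def by blast
    then show "q \<in> (S - W - A) \<union> ((Y - A) \<union> (W \<inter> S))"
      using p side_edge_closed[OF assms(1) _ \<open>E p q\<close>, of Y a] unfolding S_def by blast
  qed
  have sub: "side V E ((Y - A) \<union> (W \<inter> S)) x \<subseteq> S - W - A"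
    using side_subset_if_closed[OF assms(6) closed] .
  have "S \<subseteq> V - Y" "A \<subseteq> V - W" unfolding S_def A_def by (rule side_subset)+
  then have "is_cut V E ((Y - A) \<union> (W \<inter> S))"
    using assms(2,3,6,7) sub by (intro is_cut_if_not_in_side[of _ _ x y]) auto
  with sub show ?thesis by blast
qed

lemma card_corner_separators_le:
  assumes "finite Y" "finite W"
  shows "card ((Y - A) \<union> (W \<inter> S)) + card ((W - S) \<union> (Y \<inter> A)) \<le> card Y + card W"
proof -
  have "card Y = card (Y - A) + card (Y \<inter> A)" "card W = card (W \<inter> S) + card (W - S)"
    using card_Int_Diff[OF assms(1), of A] card_Int_Diff[OF assms(2), of S] by (simp_all add: Int_commute)
  then show ?thesis using card_Un_le[of "Y - A" "W \<inter> S"] card_Un_le[of "W - S" "Y \<inter> A"] by linarith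
qed

lemma corner_separator_is_kcut:
  fixes V :: "'a set" and E :: "'a \<Rightarrow> 'a \<Rightarrow> bool" and Y W :: "'a set" and a b x y :: 'a
  assumes "simple_graph V E" "is_kcut V E Y" "is_kcut V E W"
  defines "S \<equiv> side V E Y a" and "A \<equiv> side V E W b"
  assumes "x \<in> S - W - A" "y \<in> A - Y - S"
  shows "is_kcut V E ((Y - A) \<union> (W \<inter> S))"
proof -
  have sub: "Y \<subseteq> V" "W \<subseteq> V" and card: "card Y = vconn V E" "card W = vconn V E"
    using assms(2,3) unfolding is_kcut_def is_cut_def by auto
  have fin: "finite Y" "finite W"
    using sub assms(1) finite_subset unfolding simple_graph_def by blast+
  have cuts: "is_cut V E ((Y - A) \<union> (W \<inter> S))" "is_cut V E ((W - S) \<union> (Y \<inter> A))"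
    using side_corner_is_cut[OF assms(1) sub, where a=a and b=b and x=x and y=y]
      side_corner_is_cut[OF assms(1) sub(2,1), where a=b and b=a and x=y and y=x] assms(6,7)
    unfolding S_def A_def by blast+
  have "card ((Y - A) \<union> (W \<inter> S)) = vconn V E"
    using vconn_le_card_cut[OF assms(1) cuts(1)] vconn_le_card_cut[OF assms(1) cuts(2)]
      card_corner_separators_le[OF fin, of A S] card by linarith
  with cuts(1) show ?thesis unfolding is_kcut_def by blast
qed

lemma card_lt_if_corner_empty:
  assumes "finite S" "finite Y" "finite W"
    and "card Y \<le> card ((Y - A) \<union> (W \<inter> S))"
    and "A \<subseteq> S \<union> Y" "S \<inter> Y = {}" "A \<inter> W = {}" "x \<in> S - W - A"
  shows "card A < card S"
proof -
  have "card Y = card (Y - A) + card (Y \<inter> A)"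
    using card_Int_Diff[OF assms(2), of A] by (simp add: Int_commute)
  then have YA: "card (Y \<inter> A) \<le> card (W \<inter> S)"
    using assms(4) card_Un_le[of "Y - A" "W \<inter> S"] by linarith
  have "A = (A \<inter> S) \<union> (Y \<inter> A)" "(A \<inter> S) \<inter> (Y \<inter> A) = {}" using assms(5,6) by blast+
  then have "card A = card (A \<inter> S) + card (Y \<inter> A)"
    using assms(1,2) by (metis card_Un_disjoint finite_Int inf_commute)
  moreover have "card (A \<inter> S) + card (W \<inter> S) < card S"
  proof -
    have "(A \<inter> S) \<union> (W \<inter> S) \<subset> S" "(A \<inter> S) \<inter> (W \<inter> S) = {}" using assms(7,8) by blast+
    then show ?thesis using assms(1)
      by (metis card_Un_disjoint finite_Int inf_commute psubset_card_mono finite_subset le_sup_iff psubset_imp_subset)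
  qed
  ultimately show ?thesis using YA by linarith
qed

theorem lemma10:
  fixes V :: "'a set" and E :: "'a \<Rightarrow> 'a \<Rightarrow> bool" and u v :: 'a and W :: "'a set" and t :: nat and Yv :: "'a set"
  assumes "simple_graph V E" and "graph_connected V E" and "\<not> complete_graph V E"
    and "4 * vconn V E < card V"
    and "t = nat (ceiling ((real (card V) - real (vconn V E)) / 2))"
    and "u \<in> V" and "v \<in> V"
    and "small_exists V E t u" and "is_small V E t v Yv"
    and "u \<in> side V E (Yv) v"
    and "is_kcut V E W" and "u \<notin> W"
    and "vconn V E \<le> card (side V E (Yv) v)"
    and "card (side V E (Yv) v) < card (side V E W u)"
    and "card (side V E W u) \<le> t"
  shows "v \<in> W \<union> side V E W u"
proof (rule ccontr)
  define S A where "S = side V E Yv v" and "A = side V E W u"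
  define N where "N = (Yv - A) \<union> (W \<inter> S)"
  assume v_outside: "v \<notin> W \<union> side V E W u"
  have Yv: "is_kcut V E Yv" "v \<notin> Yv" "card S \<le> t"
    and minimal: "\<And>U. is_kcut V E U \<Longrightarrow> v \<notin> U \<Longrightarrow> card (side V E U v) \<le> t \<Longrightarrow> S \<subseteq> side V E U v"
    using assms(9) unfolding is_small_def S_def by blast+
  have sub: "Yv \<subseteq> V" "W \<subseteq> V" "S \<subseteq> V - Yv" "A \<subseteq> V - W" "finite V"
    using Yv(1) assms(1,11) side_subset[of V E] unfolding S_def A_def is_kcut_def is_cut_def simple_graph_def
    by blast+
  have fin: "finite Yv" "finite W" "finite S" using sub finite_subset by blast+
  have uA: "u \<in> A" and uS: "u \<in> S" using assms(6,10,12) mem_side_self[of u V W] unfolding A_def S_def by auto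
  have vX: "v \<in> S - W - A" using v_outside Yv(2) assms(7) mem_side_self[of v V Yv] unfolding S_def A_def by auto
  have N: "is_cut V E N" "side V E N v \<subseteq> S - W - A"
    using side_corner_is_cut[OF assms(1) sub(1,2) vX[unfolded S_def A_def] uA[unfolded A_def]]
    unfolding N_def S_def A_def by blast+
  show False
  proof (cases "A - Yv - S = {}")
    case True
    have "card Yv \<le> card N"
      using vconn_le_card_cut[OF assms(1) N(1)] Yv(1) unfolding is_kcut_def by simp
    then have "card A < card S"
      using card_lt_if_corner_empty[OF fin(3,1,2), of A v] True sub vX unfolding N_def by blast
    then show False using assms(14) unfolding S_def A_def by simp
  next
    case False
    then have "is_kcut V E N"
      using corner_separator_is_kcut[OF assms(1) Yv(1) assms(11)] vX unfolding N_def S_def A_def by blast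
    moreover have "card (side V E N v) \<le> t"
      using N(2) Yv(3) card_mono[OF fin(3), of "side V E N v"] by (meson Diff_subset order_trans)
    moreover have "v \<notin> N" using vX Yv(2) unfolding N_def by blast
    ultimately have "S \<subseteq> side V E N v" using minimal by blast
    then show False using N(2) uS uA by blast
  qed
qed

end
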